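(* Let $d\ge1$, $a$, $b$ be integers and $x_0$ a real number. If for every $x\le x_0$ $$\pi(x;d,a)\ge\pi(x;d,b)\qquad\text{and}\qquad\sum_{\substack{1<p^r\le x\\ p\equiv a\ (\mathrm{mod}\ d)}}\log p\ge\sum_{\substack{1<p^r\le x\\ p\equiv b\ (\mathrm{mod}\ d)}}\log p,$$ then $\lambda_{d,a}(x)\ge\lambda_{d,b}(x)$ for every $x\le x_0$.
   Context: $p$ runs over primes and $r$ over positive integers. $\pi(x;d,a)$ is the number of primes $p\le x$ with $p\equiv a\pmod d$. Let $S_{d,a}$ be the set of positive integers all of whose prime divisors $p$ satisfy $p\equiv a\pmod d$ (including $1$), and $\lambda_{d,a}(x)=\sum_{n\le x,\ n\in S_{d,a}}\log n$ (in the paper $\lambda_{g_{d,a}}(x)$, with $g_{d,a}$ the indicator of $S_{d,a}$). *)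

theory Defs
  imports "HOL-Analysis.Analysis" "HOL-Number_Theory.Number_Theory"
begin

definition prime_count_ap :: "int \<Rightarrow> int \<Rightarrow> real \<Rightarrow> nat" where
  "prime_count_ap d a x = card {p::nat. prime p \<and> real p \<le> x \<and> [int p = a] (mod d)}"

definition psi_ap :: "int \<Rightarrow> int \<Rightarrow> real \<Rightarrow> real" where
  "psi_ap d a x = (\<Sum>(p, r) \<in> {(p::nat, r::nat). prime p \<and> r \<ge> 1 \<and> real (p ^ r) \<le> x
        \<and> [int p = a] (mod d)}. ln (real p))"

definition S_ap :: "int \<Rightarrow> int \<Rightarrow> nat set" where
  "S_ap d a = {n::nat. n \<ge> 1 \<and> (\<forall>p. prime p \<longrightarrow> p dvd n \<longrightarrow> [int p = a] (mod d))}"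

definition lambda_ap :: "int \<Rightarrow> int \<Rightarrow> real \<Rightarrow> real" where
  "lambda_ap d a x = (\<Sum>n \<in> {n. n \<in> S_ap d a \<and> real n \<le> x}. ln (real n))"

end

theory Submission
  imports Defs
begin

(* Only the two sets of primes P = {p = a mod d} and Q = {p = b mod d} matter.  Write S_P for
   the integers composed of primes of P and N_P(y) = #{n in S_P. n <= y}.  Since
   ln n = sum_{m | n} Lambda(m) and S_P is closed under divisors and products,
     lambda_P(x) = sum_{m in S_P, m <= x} Lambda(m) N_P(x/m),
   and exchanging the order of summation gives
     sum_{m in S_P, m <= x} Lambda(m) N_Q(x/m) = sum_{k in S_Q, k <= x} psi_P(x/k).
   Hence
     lambda_Q(x) = sum_k psi_Q(x/k) <= sum_k psi_P(x/k) = sum_m Lambda(m) N_Q(x/m)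
                 <= sum_m Lambda(m) N_P(x/m) = lambda_P(x).
   The bound N_Q <= N_P comes from the prime counting hypothesis: it yields greedily an
   injection f from the primes of Q into those of P with f(q) <= q, and replacing every
   prime factor q of n by f(q) injects S_Q into S_P without increasing n. *)

definition composed_of :: "nat set \<Rightarrow> nat set" where
  "composed_of P = {n. 0 < n \<and> (\<forall>p. prime p \<longrightarrow> p dvd n \<longrightarrow> p \<in> P)}"

definition psi_in :: "nat set \<Rightarrow> real \<Rightarrow> real" where
  "psi_in P x = (\<Sum>m\<in>{m \<in> composed_of P. real m \<le> x}. mangoldt m)"

lemma finite_Collect_real_le: "finite {n \<in> A. real n \<le> x}"
  by (rule finite_subset[of _ "{..nat \<lfloor>x\<rfloor>}"]) (auto intro: le_nat_floor)

lemma composed_of_pos: "n \<in> composed_of P \<Longrightarrow> 0 < n"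
  by (simp add: composed_of_def)

lemma composed_of_mult: "m \<in> composed_of P \<Longrightarrow> n \<in> composed_of P \<Longrightarrow> m * n \<in> composed_of P"
  by (auto simp: composed_of_def prime_dvd_mult_iff)

lemma composed_of_dvd: "n \<in> composed_of P \<Longrightarrow> m dvd n \<Longrightarrow> m \<in> composed_of P"
  by (auto simp: composed_of_def intro: dvd_trans dvd_pos_nat)

lemma card_multiples_composed_of:
  assumes "m \<in> composed_of P"
  shows "card {n \<in> composed_of P. real n \<le> x \<and> m dvd n} =
         card {k \<in> composed_of P. real k \<le> x / real m}"
proof -
  have "0 < m" using assms by (rule composed_of_pos)
  have quotient: "n div m \<in> composed_of P" if "n \<in> composed_of P" "m dvd n" for n
    using that by (metis composed_of_dvd dvd_mult_div_cancel dvd_triv_right)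
  have "bij_betw (\<lambda>k. m * k) {k \<in> composed_of P. real k \<le> x / real m}
          {n \<in> composed_of P. real n \<le> x \<and> m dvd n}"
    by (rule bij_betw_byWitness[where f' = "\<lambda>n. n div m"])
       (use \<open>0 < m\<close> assms quotient in
         \<open>auto simp: composed_of_mult real_of_nat_div pos_le_divide_eq divide_right_mono mult.commute\<close>)
  then show ?thesis by (simp add: bij_betw_same_card)
qed

lemma Collect_le_divide_eq:
  fixes c :: nat
  assumes "0 < c"
  shows "{n \<in> A. real n \<le> x / real c} = {n \<in> {n \<in> A. real n \<le> x}. real c * real n \<le> x}"
proof -
  have "real n \<le> real c * real n" for n
    using assms by (simp add: mult_le_cancel_right1)
  then show ?thesis
    using assms by (auto simp: pos_le_divide_eq mult.commute intro: order_trans)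
qed

lemma sum_ln_composed_of:
  "(\<Sum>n\<in>{n \<in> composed_of P. real n \<le> x}. ln (real n)) =
   (\<Sum>m\<in>{m \<in> composed_of P. real m \<le> x}.
      mangoldt m * card {k \<in> composed_of P. real k \<le> x / real m})"
proof -
  let ?S = "{n \<in> composed_of P. real n \<le> x}"
  have divisors: "{m \<in> ?S. m dvd n} = {m. m dvd n}" if "n \<in> ?S" for n
  proof -
    have "real m \<le> x" if "m dvd n" for m
      using \<open>n \<in> ?S\<close> that composed_of_pos[of n P] by (auto dest!: dvd_imp_le)
    then show ?thesis
      using \<open>n \<in> ?S\<close> composed_of_dvd by auto
  qed
  have "(\<Sum>n\<in>?S. ln (real n)) = (\<Sum>n\<in>?S. \<Sum>m\<in>{m \<in> ?S. m dvd n}. mangoldt m)"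
  proof (rule sum.cong[OF refl])
    fix n assume "n \<in> ?S"
    then have "ln (real n) = (\<Sum>m | m dvd n. mangoldt m)"
      using mangoldt_sum[of n, where 'a = real] composed_of_pos[of n P] by simp
    then show "ln (real n) = (\<Sum>m\<in>{m \<in> ?S. m dvd n}. mangoldt m)"
      by (simp only: divisors[OF \<open>n \<in> ?S\<close>])
  qed
  also have "\<dots> = (\<Sum>m\<in>?S. \<Sum>n\<in>{n \<in> ?S. m dvd n}. mangoldt m)"
    by (rule sum.swap_restrict) (simp_all add: finite_Collect_real_le)
  also have "\<dots> = (\<Sum>m\<in>?S. mangoldt m * card {k \<in> composed_of P. real k \<le> x / real m})"
    by (intro sum.cong refl) (simp add: card_multiples_composed_of)
  finally show ?thesis .
qed

lemma sum_mangoldt_card_composed_of_swap: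
  "(\<Sum>m\<in>{m \<in> composed_of P. real m \<le> x}.
      mangoldt m * card {k \<in> composed_of Q. real k \<le> x / real m}) =
   (\<Sum>k\<in>{k \<in> composed_of Q. real k \<le> x}. psi_in P (x / real k))"
proof -
  let ?S = "\<lambda>A. {n \<in> composed_of A. real n \<le> x}"
  have "(\<Sum>m\<in>?S P. mangoldt m * card {k \<in> composed_of Q. real k \<le> x / real m}) =
        (\<Sum>m\<in>?S P. \<Sum>k\<in>{k \<in> ?S Q. real m * real k \<le> x}. mangoldt m)"
    by (intro sum.cong refl) (simp add: Collect_le_divide_eq composed_of_pos[of _ P])
  also have "\<dots> = (\<Sum>k\<in>?S Q. \<Sum>m\<in>{m \<in> ?S P. real m * real k \<le> x}. mangoldt m)"
    by (rule sum.swap_restrict) (simp_all add: finite_Collect_real_le)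
  also have "\<dots> = (\<Sum>k\<in>?S Q. psi_in P (x / real k))"
    unfolding psi_in_def
    by (intro sum.cong refl) (simp add: Collect_le_divide_eq composed_of_pos[of _ Q] mult.commute)
  finally show ?thesis .
qed

lemma exists_inj_on_le_of_card_le:
  fixes B P :: "'a::linorder set"
  assumes "finite B" and "\<And>z. z \<in> B \<Longrightarrow> card {q \<in> B. q \<le> z} \<le> card {p \<in> P. p \<le> z}"
  shows "\<exists>f. inj_on f B \<and> f ` B \<subseteq> P \<and> (\<forall>q\<in>B. f q \<le> q)"
  using assms
proof (induction B rule: finite_linorder_max_induct)
  case empty
  then show ?case by simp
next
  case (insert b B)
  have "{q \<in> insert b B. q \<le> z} = {q \<in> B. q \<le> z}" if "z \<in> B" for z
    using insert.hyps(2) that by fastforce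
  then obtain f where f: "inj_on f B" "f ` B \<subseteq> P" "\<forall>q\<in>B. f q \<le> q"
    using insert.IH insert.prems by force
  have "{q \<in> insert b B. q \<le> b} = insert b B"
    using insert.hyps(2) by force
  then have "card (insert b B) \<le> card {p \<in> P. p \<le> b}"
    using insert.prems[of b] by simp
  moreover have "b \<notin> B"
    using insert.hyps(2) by blast
  ultimately have card_less: "card (f ` B) < card {p \<in> P. p \<le> b}"
    using insert.hyps(1) f(1) by (simp add: card_image)
  have "\<not> {p \<in> P. p \<le> b} \<subseteq> f ` B"
    using card_mono[OF finite_imageI[OF insert.hyps(1)]] card_less by (meson not_le)
  then obtain p where p: "p \<in> P" "p \<le> b" "p \<notin> f ` B"
    by blast
  have "inj_on (f(b := p)) (insert b B)"
    unfolding inj_on_insert using inj_on_fun_updI[OF f(1) p(3)] p(3) \<open>b \<notin> B\<close>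
    by (simp add: fun_upd_image) blast
  moreover have "f(b := p) ` insert b B \<subseteq> P"
    using f(2) p(1) \<open>b \<notin> B\<close> by auto
  moreover have "\<forall>q\<in>insert b B. (f(b := p)) q \<le> q"
    using f(3) p(2) by auto
  ultimately show ?case
    by blast
qed

lemma prod_mset_image_le:
  fixes f :: "nat \<Rightarrow> nat"
  shows "(\<And>q. q \<in># M \<Longrightarrow> f q \<le> q) \<Longrightarrow> prod_mset (image_mset f M) \<le> prod_mset M"
  by (induction M) (auto intro: mult_le_mono)

lemma card_composed_of_le_of_inj_on:
  assumes "inj_on f Q" and "\<And>q. q \<in> Q \<Longrightarrow> prime (f q) \<and> f q \<in> P \<and> f q \<le> q"
  shows "card {n \<in> composed_of Q. real n \<le> y} \<le> card {n \<in> composed_of P. real n \<le> y}"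
proof -
  define \<phi> where "\<phi> n = prod_mset (image_mset f (prime_factorization n))" for n
  have factors_in_Q: "set_mset (prime_factorization n) \<subseteq> Q" if "n \<in> composed_of Q" for n
    using that by (auto simp: composed_of_def)
  have factorization_\<phi>: "prime_factorization (\<phi> n) = image_mset f (prime_factorization n)"
    if "n \<in> composed_of Q" for n
    unfolding \<phi>_def using factors_in_Q[OF that] assms(2)
    by (intro prime_factorization_prod_mset_primes) auto
  have \<phi>_le: "\<phi> n \<le> n" if "n \<in> composed_of Q" for n
  proof -
    have "\<phi> n \<le> prod_mset (prime_factorization n)"
      unfolding \<phi>_def using factors_in_Q[OF that] assms(2) by (intro prod_mset_image_le) auto
    then show ?thesis
      using composed_of_pos[OF that] by simp
  qed
  have \<phi>_composed_of: "\<phi> n \<in> composed_of P" if "n \<in> composed_of Q" for n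
  proof -
    have "prime (f q)" if "q \<in># prime_factorization n" for q
      using that factors_in_Q[OF \<open>n \<in> composed_of Q\<close>] assms(2) by blast
    then have "0 \<notin># image_mset f (prime_factorization n)"
      by force
    then have "0 < \<phi> n"
      unfolding \<phi>_def by (intro gr0I) simp
    moreover have "p \<in> P" if "prime p" "p dvd \<phi> n" for p
    proof -
      have "p \<in># prime_factorization (\<phi> n)"
        using that \<open>0 < \<phi> n\<close> by (simp add: in_prime_factors_iff)
      then obtain q where "q \<in># prime_factorization n" "p = f q"
        by (auto simp: factorization_\<phi>[OF \<open>n \<in> composed_of Q\<close>])
      then show ?thesis
        using factors_in_Q[OF \<open>n \<in> composed_of Q\<close>] assms(2) by blast
    qed
    ultimately show ?thesis
      by (simp add: composed_of_def)
  qed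
  have \<phi>_inverse: "prod_mset (image_mset (inv_into Q f) (prime_factorization (\<phi> n))) = n"
    if "n \<in> composed_of Q" for n
  proof -
    have "image_mset (inv_into Q f) (prime_factorization (\<phi> n)) =
          image_mset id (prime_factorization n)"
      unfolding factorization_\<phi>[OF that] multiset.map_comp
      using factors_in_Q[OF that] assms(1) by (intro image_mset_cong) (simp add: subsetD)
    then show ?thesis
      using composed_of_pos[OF that] by simp
  qed
  show ?thesis
  proof (rule card_inj_on_le[of \<phi>])
    show "inj_on \<phi> {n \<in> composed_of Q. real n \<le> y}"
      using \<phi>_inverse
      by (intro inj_on_inverseI[where
            g = "\<lambda>m. prod_mset (image_mset (inv_into Q f) (prime_factorization m))"]) simp
    show "\<phi> ` {n \<in> composed_of Q. real n \<le> y} \<subseteq> {n \<in> composed_of P. real n \<le> y}"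
    proof (rule image_subsetI)
      fix n assume "n \<in> {n \<in> composed_of Q. real n \<le> y}"
      then show "\<phi> n \<in> {n \<in> composed_of P. real n \<le> y}"
        using \<phi>_composed_of of_nat_mono[OF \<phi>_le[of n]] by simp
    qed
  qed (rule finite_Collect_real_le)
qed

lemma card_composed_of_mono:
  assumes "\<And>z. z \<le> y \<Longrightarrow>
    card {p. prime p \<and> p \<in> Q \<and> real p \<le> z} \<le> card {p. prime p \<and> p \<in> P \<and> real p \<le> z}"
  shows "card {n \<in> composed_of Q. real n \<le> y} \<le> card {n \<in> composed_of P. real n \<le> y}"
proof -
  define B where "B = {q. prime q \<and> q \<in> Q \<and> real q \<le> y}"
  have "finite B"
    using finite_Collect_real_le[of "{q. prime q \<and> q \<in> Q}" y]
    by (simp add: B_def conj_commute conj_left_commute)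
  have card_B: "card {q \<in> B. q \<le> z} \<le> card {p \<in> {p. prime p \<and> p \<in> P}. p \<le> z}"
    if "z \<in> B" for z
  proof -
    have "{q \<in> B. q \<le> z} = {q. prime q \<and> q \<in> Q \<and> real q \<le> real z}"
      using that by (auto simp: B_def)
    then show ?thesis
      using assms[of "real z"] that by (simp add: B_def conj_commute conj_left_commute)
  qed
  then obtain f where f: "inj_on f B" "f ` B \<subseteq> {p. prime p \<and> p \<in> P}" "\<forall>q\<in>B. f q \<le> q"
    using exists_inj_on_le_of_card_le[OF \<open>finite B\<close> card_B] by blast
  have "{n \<in> composed_of Q. real n \<le> y} = {n \<in> composed_of B. real n \<le> y}"
  proof -
    have "real p \<le> y" if "p dvd n" "0 < n" "real n \<le> y" for p n
      using that dvd_imp_le[of p n] by (meson of_nat_le_iff order_trans)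
    then show ?thesis
      by (auto simp: composed_of_def B_def)
  qed
  also have "card \<dots> \<le> card {n \<in> composed_of P. real n \<le> y}"
    using f by (intro card_composed_of_le_of_inj_on) auto
  finally show ?thesis .
qed

theorem sum_ln_composed_of_mono:
  assumes "\<And>y. y \<le> x0 \<Longrightarrow>
    card {p. prime p \<and> p \<in> Q \<and> real p \<le> y} \<le> card {p. prime p \<and> p \<in> P \<and> real p \<le> y}"
    and "\<And>y. y \<le> x0 \<Longrightarrow> psi_in Q y \<le> psi_in P y"
    and "x \<le> x0"
  shows "(\<Sum>n\<in>{n \<in> composed_of Q. real n \<le> x}. ln (real n)) \<le>
         (\<Sum>n\<in>{n \<in> composed_of P. real n \<le> x}. ln (real n))"
proof -
  have below_x0: "x / real n \<le> x0" if "n \<in> composed_of A" "real n \<le> x" for A n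
  proof -
    have "1 \<le> real n"
      using composed_of_pos[OF that(1)] by simp
    then have "x / real n \<le> x"
      using that(2) by (simp add: divide_le_eq mult_le_cancel_left1)
    then show ?thesis
      using assms(3) by linarith
  qed
  have "(\<Sum>n\<in>{n \<in> composed_of Q. real n \<le> x}. ln (real n)) =
        (\<Sum>k\<in>{k \<in> composed_of Q. real k \<le> x}. psi_in Q (x / real k))"
    by (simp add: sum_ln_composed_of sum_mangoldt_card_composed_of_swap)
  also have "\<dots> \<le> (\<Sum>k\<in>{k \<in> composed_of Q. real k \<le> x}. psi_in P (x / real k))"
    using below_x0 assms(2) by (intro sum_mono) auto
  also have "\<dots> = (\<Sum>m\<in>{m \<in> composed_of P. real m \<le> x}.
                      mangoldt m * card {k \<in> composed_of Q. real k \<le> x / real m})"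
    by (simp add: sum_mangoldt_card_composed_of_swap)
  also have "\<dots> \<le> (\<Sum>m\<in>{m \<in> composed_of P. real m \<le> x}.
                      mangoldt m * card {k \<in> composed_of P. real k \<le> x / real m})"
    using below_x0 assms(1) card_composed_of_mono
    by (intro sum_mono mult_left_mono) (auto simp: mangoldt_nonneg order_trans)
  also have "\<dots> = (\<Sum>n\<in>{n \<in> composed_of P. real n \<le> x}. ln (real n))"
    by (simp add: sum_ln_composed_of)
  finally show ?thesis .
qed

lemma prime_power_in_composed_of_iff:
  assumes "prime p" "0 < r"
  shows "p ^ r \<in> composed_of P \<longleftrightarrow> p \<in> P"
  using assms by (auto simp: composed_of_def prime_gt_0_nat
      dest: prime_dvd_power primes_dvd_imp_eq)

lemma psi_in_eq_sum_prime_powers: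
  "psi_in P x = (\<Sum>(p, r)\<in>{(p, r). prime p \<and> p \<in> P \<and> r \<ge> 1 \<and> real (p ^ r) \<le> x}. ln (real p))"
proof -
  let ?T = "{(p, r). prime p \<and> p \<in> P \<and> r \<ge> 1 \<and> real (p ^ r) \<le> x}"
  have "psi_in P x = (\<Sum>m\<in>{m \<in> composed_of P. real m \<le> x \<and> primepow m}. mangoldt m)"
    unfolding psi_in_def
    by (rule sum.mono_neutral_right) (auto simp: finite_Collect_real_le mangoldt_def)
  also have "{m \<in> composed_of P. real m \<le> x \<and> primepow m} = (\<lambda>(p, r). p ^ r) ` ?T"
    by (auto simp: primepow_def prime_power_in_composed_of_iff image_iff Suc_le_eq)
  also have "(\<Sum>m\<in>(\<lambda>(p, r). p ^ r) ` ?T. mangoldt m) = (\<Sum>(p, r)\<in>?T. ln (real p))"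
    by (subst sum.reindex) (auto simp: inj_on_def prime_power_inj'' intro!: sum.cong)
  finally show ?thesis .
qed

lemma S_ap_eq_composed_of: "S_ap d a = composed_of {p. [int p = a] (mod d)}"
  by (auto simp: S_ap_def composed_of_def)

theorem corollary2:
  fixes d a b :: int and x0 :: real
  assumes "d \<ge> 1"
    and "\<And>x. x \<le> x0 \<Longrightarrow> prime_count_ap d a x \<ge> prime_count_ap d b x"
    and "\<And>x. x \<le> x0 \<Longrightarrow> psi_ap d a x \<ge> psi_ap d b x"
  shows "\<forall>x. x \<le> x0 \<longrightarrow> lambda_ap d a x \<ge> lambda_ap d b x"
proof (intro allI impI)
  fix x assume "x \<le> x0"
  let ?P = "{p. [int p = a] (mod d)}" and ?Q = "{p. [int p = b] (mod d)}"
  have "card {p. prime p \<and> p \<in> ?Q \<and> real p \<le> y} \<le> card {p. prime p \<and> p \<in> ?P \<and> real p \<le> y}"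
    if "y \<le> x0" for y
    using assms(2)[OF that] by (simp add: prime_count_ap_def conj_commute conj_left_commute)
  moreover have "psi_in ?Q y \<le> psi_in ?P y" if "y \<le> x0" for y
    using assms(3)[OF that]
    by (simp add: psi_ap_def psi_in_eq_sum_prime_powers conj_commute conj_left_commute)
  ultimately show "lambda_ap d b x \<le> lambda_ap d a x"
    unfolding lambda_ap_def S_ap_eq_composed_of
    using sum_ln_composed_of_mono[OF _ _ \<open>x \<le> x0\<close>] by simp
qed

end
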